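(* Given $\kappa>1$, let $0<\delta<1/4$ be such that $1-2\delta>\delta^{1-1/\kappa}$. Let $G$ be a bipartite graph with vertex parts $U$ and $R$. Then there exists $U'\subseteq U$ such that $G'=G[U'\cup R]$ (with parts $U'$ and $R$) is $\delta^2$-reduced, $d_{\mathrm{avg}}(U')\ge \delta\, d_{\mathrm{avg}}(U)$, and for every real $x\ge\kappa$ we have $$|U'|\,d_{\mathrm{avg}}(U')^x\ \ge\ \delta^x\,|U|\,d_{\mathrm{avg}}(U)^x.$$
   Context: For a set $S$ of vertices of a graph, $d_{\mathrm{avg}}(S)$ is the average degree of the vertices of $S$. A bipartite graph with vertex parts $U$ and $R$ is $\delta$-reduced if every $u\in U$ has degree in $[\delta\, d_{\mathrm{avg}}(U),\ \delta^{-1}d_{\mathrm{avg}}(U)]$ (degrees and averages taken in that bipartite graph). *)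

theory Defs
  imports Complex_Main
begin

text \<open>Degrees of vertices of U in G[U' \<union> R] only depend on R.\<close>

definition bip_graph :: "('a \<Rightarrow> 'a \<Rightarrow> bool) \<Rightarrow> 'a set \<Rightarrow> 'a set \<Rightarrow> bool" where
  "bip_graph E U R \<longleftrightarrow> finite U \<and> finite R \<and> U \<inter> R = {} \<and>
     (\<forall>a b. E a b \<longleftrightarrow> E b a) \<and>
     (\<forall>a b. E a b \<longrightarrow> (a \<in> U \<and> b \<in> R) \<or> (a \<in> R \<and> b \<in> U))"

definition bdeg :: "('a \<Rightarrow> 'a \<Rightarrow> bool) \<Rightarrow> 'a set \<Rightarrow> 'a \<Rightarrow> real" where
  "bdeg E R u = real (card {r \<in> R. E u r})"

text \<open>Average degree of the vertices of S (0 if S is empty).\<close>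
definition davg :: "('a \<Rightarrow> 'a \<Rightarrow> bool) \<Rightarrow> 'a set \<Rightarrow> 'a set \<Rightarrow> real" where
  "davg E R S = (\<Sum>u\<in>S. bdeg E R u) / real (card S)"

definition reduced :: "real \<Rightarrow> ('a \<Rightarrow> 'a \<Rightarrow> bool) \<Rightarrow> 'a set \<Rightarrow> 'a set \<Rightarrow> bool" where
  "reduced \<delta> E U R \<longleftrightarrow>
     (\<forall>u\<in>U. \<delta> * davg E R U \<le> bdeg E R u \<and> bdeg E R u \<le> davg E R U / \<delta>)"

end

theory Submission
  imports Defs
begin

(* Degrees of vertices of U' in G[U' \<union> R] are their degrees in G, so the statement is really
   about nonnegative weights w on a finite set S, with total e and average a; note that
   |S| a^x = |S|^(1-x) e^x.  Let H be the set of weights above a/\<delta>.  If H carries at least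
   \<delta>^(1-1/\<kappa>) e, then |H| < \<delta>|S| by Markov's inequality, and for x \<ge> \<kappa> shrinking the count
   by \<delta> while keeping that much mass multiplies |S|^(1-x) e^x by \<delta>^(1-x/\<kappa>) \<ge> 1, so we
   recurse into H.  Otherwise H carries less than (1 - 2\<delta>) e and the weights below \<delta>a carry at
   most \<delta>e, so the band [\<delta>a, a/\<delta>] carries more than \<delta>e.  The band is \<delta>^2-balanced since
   its own average also lies in [\<delta>a, a/\<delta>], and its mass gives the bound with the factor \<delta>^x. *)

definition wavg :: "('a \<Rightarrow> real) \<Rightarrow> 'a set \<Rightarrow> real" where
  "wavg w S = sum w S / real (card S)"

definition balanced :: "real \<Rightarrow> ('a \<Rightarrow> real) \<Rightarrow> 'a set \<Rightarrow> bool" where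
  "balanced c w S \<longleftrightarrow> (\<forall>u\<in>S. c * wavg w S \<le> w u \<and> w u \<le> wavg w S / c)"

definition reduces_to :: "real \<Rightarrow> real \<Rightarrow> ('a \<Rightarrow> real) \<Rightarrow> 'a set \<Rightarrow> 'a set \<Rightarrow> bool" where
  "reduces_to \<delta> \<kappa> w S M \<longleftrightarrow> M \<subseteq> S \<and> balanced (\<delta>\<^sup>2) w M \<and> \<delta> * wavg w S \<le> wavg w M \<and>
     (\<forall>x\<ge>\<kappa>. \<delta> powr x * real (card S) * wavg w S powr x \<le> real (card M) * wavg w M powr x)"

lemma davg_eq_wavg: "davg E R S = wavg (bdeg E R) S"
  by (simp add: davg_def wavg_def)

lemma reduced_iff_balanced: "reduced c E U R \<longleftrightarrow> balanced c (bdeg E R) U"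
  by (simp add: reduced_def balanced_def davg_eq_wavg)

lemma card_mult_wavg_powr:
  assumes "0 \<le> sum w S"
  shows "real (card S) * wavg w S powr x = real (card S) powr (1 - x) * sum w S powr x"
proof (cases "card S = 0")
  case False
  then show ?thesis
    using assms by (simp add: wavg_def powr_divide powr_diff)
qed simp

lemma powr_mass_mono:
  fixes m n e e' x :: real
  assumes "1 \<le> x" "0 < m" "m \<le> n" "0 \<le> e" "e \<le> e'"
  shows "n powr (1 - x) * e powr x \<le> m powr (1 - x) * e' powr x"
proof (rule mult_mono)
  show "n powr (1 - x) \<le> m powr (1 - x)"
    using assms by (intro powr_mono2') auto
  show "e powr x \<le> e' powr x"
    using assms by (intro powr_mono2) auto
qed auto

lemma powr_mass_concentrated:
  fixes m n e e' \<delta> \<kappa> x :: real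
  assumes "0 < \<delta>" "\<delta> < 1" "1 < \<kappa>" "\<kappa> \<le> x"
    and "0 < m" "m \<le> \<delta> * n" "0 \<le> e" "\<delta> powr (1 - 1/\<kappa>) * e \<le> e'"
  shows "n powr (1 - x) * e powr x \<le> m powr (1 - x) * e' powr x"
proof -
  have "0 < n"
    using assms by (smt (verit) mult_nonneg_nonpos)
  have gain: "1 \<le> \<delta> powr (1 - x/\<kappa>)"
  proof -
    have "\<delta> powr (1 - x/\<kappa>) = (1/\<delta>) powr (x/\<kappa> - 1)"
      using assms by (simp add: powr_divide powr_minus_divide powr_diff)
    also have "1 \<le> \<dots>"
      using assms by (intro ge_one_powr_ge_zero) auto
    finally show ?thesis .
  qed
  have "n powr (1 - x) * e powr x \<le> \<delta> powr (1 - x/\<kappa>) * (n powr (1 - x) * e powr x)"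
    using mult_right_mono[OF gain, of "n powr (1 - x) * e powr x"] by simp
  also have "\<dots> = (\<delta> * n) powr (1 - x) * (\<delta> powr (1 - 1/\<kappa>) * e) powr x"
    using assms \<open>0 < n\<close>
    by (simp add: powr_mult powr_powr powr_add[symmetric] algebra_simps diff_divide_distrib)
  also have "\<dots> \<le> m powr (1 - x) * e' powr x"
    using assms by (intro powr_mass_mono) auto
  finally show ?thesis .
qed

lemma wavg_ge:
  assumes "finite S" "S \<noteq> {}" "\<forall>u\<in>S. lo \<le> w u"
  shows "lo \<le> wavg w S"
  using sum_bounded_below[of S lo w] assms
  by (simp add: wavg_def card_gt_0_iff pos_le_divide_eq mult.commute)

lemma wavg_le:
  assumes "finite S" "S \<noteq> {}" "\<forall>u\<in>S. w u \<le> hi"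
  shows "wavg w S \<le> hi"
  using sum_bounded_above[of S w hi] assms
  by (simp add: wavg_def card_gt_0_iff pos_divide_le_eq mult.commute)

lemma balanced_sq_of_band:
  fixes c a :: real
  assumes "0 < c" "c * a \<le> wavg w M" "wavg w M \<le> a / c"
    and "\<forall>u\<in>M. c * a \<le> w u \<and> w u \<le> a / c"
  shows "balanced (c\<^sup>2) w M"
  unfolding balanced_def
proof
  fix u assume "u \<in> M"
  have "c\<^sup>2 * wavg w M \<le> c\<^sup>2 * (a / c)"
    using assms by (intro mult_left_mono) auto
  also have "\<dots> = c * a"
    using assms by (simp add: power2_eq_square)
  also have "\<dots> \<le> w u"
    using \<open>u \<in> M\<close> assms by auto
  finally have lower: "c\<^sup>2 * wavg w M \<le> w u" .
  have "w u \<le> a / c"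
    using \<open>u \<in> M\<close> assms by auto
  also have "\<dots> = (c * a) / c\<^sup>2"
    using assms by (simp add: power2_eq_square)
  also have "\<dots> \<le> wavg w M / c\<^sup>2"
    using assms by (intro divide_right_mono) auto
  finally show "c\<^sup>2 * wavg w M \<le> w u \<and> w u \<le> wavg w M / c\<^sup>2"
    using lower by simp
qed

lemma card_mult_less_sum:
  assumes "finite S" "\<forall>u\<in>S. 0 \<le> w u" "H \<subseteq> S" "H \<noteq> {}" "\<forall>u\<in>H. t < w u"
  shows "real (card H) * t < sum w S"
proof -
  have "finite H"
    using assms finite_subset by blast
  then have "real (card H) * t < sum w H"
    using assms sum_strict_mono[of H "\<lambda>_. t" w] by auto
  also have "\<dots> \<le> sum w S"
    using assms by (intro sum_mono2) auto
  finally show ?thesis .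
qed

lemma sum_below_scaled_wavg:
  fixes c :: real
  assumes "finite S" "\<forall>u\<in>S. 0 \<le> w u" "0 \<le> c"
  shows "sum w {u\<in>S. w u < c * wavg w S} \<le> c * sum w S"
proof -
  let ?L = "{u\<in>S. w u < c * wavg w S}"
  have "0 \<le> wavg w S"
    using assms by (simp add: wavg_def sum_nonneg)
  have "sum w ?L \<le> real (card ?L) * (c * wavg w S)"
    using sum_bounded_above[of ?L w "c * wavg w S"] by auto
  also have "\<dots> \<le> real (card S) * (c * wavg w S)"
    using assms \<open>0 \<le> wavg w S\<close> by (intro mult_right_mono) (auto intro: card_mono)
  also have "\<dots> = c * sum w S"
    using assms(1) by (cases "S = {}") (auto simp: wavg_def)
  finally show ?thesis .
qed

lemma band_mass_large:
  fixes \<delta> :: real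
  assumes "finite S" "\<forall>u\<in>S. 0 \<le> w u" "0 < \<delta>" "\<delta> \<le> 1"
    and heavy: "sum w {u\<in>S. wavg w S / \<delta> < w u} < (1 - 2*\<delta>) * sum w S"
  shows "\<delta> * sum w S < sum w {u\<in>S. \<delta> * wavg w S \<le> w u \<and> w u \<le> wavg w S / \<delta>}"
proof -
  define a where "a = wavg w S"
  define L where "L = {u\<in>S. w u < \<delta> * a}"
  define M where "M = {u\<in>S. \<delta> * a \<le> w u \<and> w u \<le> a / \<delta>}"
  define H where "H = {u\<in>S. a / \<delta> < w u}"
  have "0 \<le> a"
    using assms by (simp add: a_def wavg_def sum_nonneg)
  have "\<delta> * a \<le> a"
    using assms \<open>0 \<le> a\<close> by (simp add: mult_left_le_one_le)
  also have "a \<le> a / \<delta>"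
    using assms \<open>0 \<le> a\<close> by (simp add: le_divide_eq mult_left_le_one_le mult.commute)
  finally have "\<delta> * a \<le> a / \<delta>" .
  then have "S = L \<union> M \<union> H" "L \<inter> M = {}" "(L \<union> M) \<inter> H = {}"
    by (auto simp: L_def M_def H_def)
  then have "sum w S = sum w L + sum w M + sum w H"
    using \<open>finite S\<close> by (metis finite_Un sum.union_disjoint)
  moreover have "sum w L \<le> \<delta> * sum w S"
    using sum_below_scaled_wavg[of S w \<delta>] assms by (simp add: L_def a_def)
  ultimately show ?thesis
    using heavy by (simp add: M_def H_def a_def algebra_simps)
qed

lemma markov_card_less:
  fixes \<delta> :: real
  assumes "finite S" "\<forall>u\<in>S. 0 \<le> w u" "0 < \<delta>" "0 < wavg w S"
    and "H \<subseteq> S" "H \<noteq> {}" "\<forall>u\<in>H. wavg w S / \<delta> < w u"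
  shows "real (card H) < \<delta> * real (card S)"
proof -
  have "sum w S = real (card S) * wavg w S"
    using assms(1,4) by (cases "S = {}") (auto simp: wavg_def)
  then have "real (card H) * (wavg w S / \<delta>) < real (card S) * wavg w S"
    using card_mult_less_sum[OF assms(1,2,5-7)] by simp
  then show ?thesis
    using assms(3,4) by (simp add: field_simps)
qed

lemma heavy_part_dominates:
  fixes \<delta> \<kappa> :: real
  assumes "0 < \<delta>" "\<delta> < 1" "1 < \<kappa>" "finite S" "\<forall>u\<in>S. 0 \<le> w u" "0 < wavg w S"
    and H_def: "H = {u\<in>S. wavg w S / \<delta> < w u}"
    and mass: "\<delta> powr (1 - 1/\<kappa>) * sum w S \<le> sum w H"
  shows "card H < card S" "wavg w S \<le> wavg w H"
    "\<forall>x\<ge>\<kappa>. real (card S) * wavg w S powr x \<le> real (card H) * wavg w H powr x"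
proof -
  have H_above: "H \<subseteq> S" "\<forall>u\<in>H. wavg w S / \<delta> < w u" "finite H"
    using assms(4) by (auto simp: H_def)
  have "0 < sum w S"
    using assms by (auto simp: wavg_def zero_less_divide_iff)
  then have "0 < sum w H"
    using mass assms(1) by (smt (verit) powr_gt_zero mult_pos_pos)
  then have "H \<noteq> {}"
    by auto
  have card_H: "real (card H) < \<delta> * real (card S)"
    using markov_card_less[OF assms(4,5,1,6) H_above(1) \<open>H \<noteq> {}\<close> H_above(2)] .
  also have "\<dots> \<le> real (card S)"
    using assms by (simp add: mult_left_le_one_le)
  finally show "card H < card S"
    by simp
  have "wavg w S \<le> wavg w S / \<delta>"
    using assms by (simp add: field_simps mult_left_le_one_le)
  also have "\<dots> \<le> wavg w H"
    using H_above \<open>H \<noteq> {}\<close> by (intro wavg_ge) auto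
  finally show "wavg w S \<le> wavg w H" .
  show "\<forall>x\<ge>\<kappa>. real (card S) * wavg w S powr x \<le> real (card H) * wavg w H powr x"
  proof (intro allI impI)
    fix x assume "\<kappa> \<le> x"
    have "0 < card H"
      using \<open>H \<noteq> {}\<close> H_above(3) by (simp add: card_gt_0_iff)
    then have "real (card S) powr (1 - x) * sum w S powr x
        \<le> real (card H) powr (1 - x) * sum w H powr x"
      using assms \<open>\<kappa> \<le> x\<close> card_H \<open>0 < sum w S\<close>
      by (intro powr_mass_concentrated[of \<delta> \<kappa>]) auto
    then show "real (card S) * wavg w S powr x \<le> real (card H) * wavg w H powr x"
      using \<open>0 < sum w S\<close> \<open>0 < sum w H\<close> by (simp add: card_mult_wavg_powr)
  qed
qed

lemma reduces_to_middle_band: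
  fixes \<delta> \<kappa> :: real
  assumes "0 < \<delta>" "\<delta> < 1" "1 \<le> \<kappa>" "finite S" "\<forall>u\<in>S. 0 \<le> w u"
    and M_def: "M = {u\<in>S. \<delta> * wavg w S \<le> w u \<and> w u \<le> wavg w S / \<delta>}"
    and mass: "\<delta> * sum w S < sum w M"
  shows "reduces_to \<delta> \<kappa> w S M"
proof -
  have "0 \<le> sum w S"
    using assms by (simp add: sum_nonneg)
  then have "0 < sum w M"
    using mass assms(1) by (smt (verit) mult_nonneg_nonneg)
  then have "M \<noteq> {}"
    by auto
  moreover have "finite M" "M \<subseteq> S"
    using assms by (auto simp: M_def)
  ultimately have band: "\<delta> * wavg w S \<le> wavg w M" "wavg w M \<le> wavg w S / \<delta>"
    by (auto simp: M_def intro!: wavg_ge wavg_le)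
  then have "balanced (\<delta>\<^sup>2) w M"
    using assms by (intro balanced_sq_of_band) (auto simp: M_def)
  have "card M > 0" "card M \<le> card S"
    using \<open>M \<noteq> {}\<close> \<open>finite M\<close> \<open>M \<subseteq> S\<close> assms(4) by (auto simp: card_gt_0_iff intro: card_mono)
  have "\<delta> powr x * real (card S) * wavg w S powr x \<le> real (card M) * wavg w M powr x"
    if "\<kappa> \<le> x" for x
  proof -
    have "\<delta> powr x * (real (card S) powr (1 - x) * sum w S powr x)
        = real (card S) powr (1 - x) * (\<delta> * sum w S) powr x"
      using assms \<open>0 \<le> sum w S\<close> by (simp add: powr_mult)
    also have "\<dots> \<le> real (card M) powr (1 - x) * sum w M powr x"
      using that assms \<open>0 \<le> sum w S\<close> \<open>card M > 0\<close> \<open>card M \<le> card S\<close>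
      by (intro powr_mass_mono) auto
    finally show ?thesis
      using \<open>0 \<le> sum w S\<close> \<open>0 < sum w M\<close> by (simp add: card_mult_wavg_powr mult.assoc)
  qed
  with \<open>M \<subseteq> S\<close> \<open>balanced (\<delta>\<^sup>2) w M\<close> band show ?thesis
    by (simp add: reduces_to_def)
qed

lemma reduces_to_self_if_wavg_zero:
  assumes "finite S" "\<forall>u\<in>S. 0 \<le> w u" "wavg w S = 0"
  shows "reduces_to \<delta> \<kappa> w S S"
proof -
  have "\<forall>u\<in>S. w u = 0"
    using assms by (auto simp: wavg_def sum_nonneg_eq_0_iff)
  with assms(3) show ?thesis
    by (simp add: reduces_to_def balanced_def)
qed

lemma reduces_to_trans_dominating:
  fixes \<delta> \<kappa> :: real
  assumes "0 < \<delta>" "H \<subseteq> S" "wavg w S \<le> wavg w H"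
    and "\<forall>x\<ge>\<kappa>. real (card S) * wavg w S powr x \<le> real (card H) * wavg w H powr x"
    and "reduces_to \<delta> \<kappa> w H M"
  shows "reduces_to \<delta> \<kappa> w S M"
  unfolding reduces_to_def
proof (intro conjI allI impI)
  show "M \<subseteq> S" "balanced (\<delta>\<^sup>2) w M"
    using assms by (auto simp: reduces_to_def)
  have "\<delta> * wavg w H \<le> wavg w M"
    using assms(5) by (simp add: reduces_to_def)
  then show "\<delta> * wavg w S \<le> wavg w M"
    using mult_left_mono[OF assms(3), of \<delta>] assms(1) by linarith
  fix x assume "\<kappa> \<le> x"
  have "\<delta> powr x * (real (card S) * wavg w S powr x)
      \<le> \<delta> powr x * (real (card H) * wavg w H powr x)"
    using assms(4) \<open>\<kappa> \<le> x\<close> by (intro mult_left_mono) auto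
  also have "\<dots> \<le> real (card M) * wavg w M powr x"
    using assms(5) \<open>\<kappa> \<le> x\<close> by (simp add: reduces_to_def mult.assoc)
  finally show "\<delta> powr x * real (card S) * wavg w S powr x \<le> real (card M) * wavg w M powr x"
    by (simp add: mult.assoc)
qed

lemma exists_reduces_to:
  fixes \<kappa> \<delta> :: real and w :: "'a \<Rightarrow> real"
  assumes "1 < \<kappa>" "0 < \<delta>" "\<delta> powr (1 - 1/\<kappa>) < 1 - 2*\<delta>"
    and "finite S" "\<forall>u\<in>S. 0 \<le> w u"
  shows "\<exists>M. reduces_to \<delta> \<kappa> w S M"
  using assms(4,5)
proof (induction "card S" arbitrary: S rule: less_induct)
  case less
  have "\<delta> < 1"
    using assms(3) \<open>0 < \<delta>\<close> powr_gt_zero[of \<delta> "1 - 1/\<kappa>"] by linarith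
  have "0 \<le> wavg w S"
    using less.prems by (simp add: wavg_def sum_nonneg)
  then consider "wavg w S = 0" | "0 < wavg w S"
    by linarith
  then show ?case
  proof cases
    case 1
    then show ?thesis
      using reduces_to_self_if_wavg_zero less.prems by blast
  next
    case 2
    define H where "H = {u\<in>S. wavg w S / \<delta> < w u}"
    show ?thesis
    proof (cases "\<delta> powr (1 - 1/\<kappa>) * sum w S \<le> sum w H")
      case True
      note heavy = heavy_part_dominates[OF \<open>0 < \<delta>\<close> \<open>\<delta> < 1\<close> \<open>1 < \<kappa>\<close> less.prems 2 H_def True]
      have "H \<subseteq> S" "finite H" "\<forall>u\<in>H. 0 \<le> w u"
        using less.prems by (auto simp: H_def)
      then show ?thesis
        using less.hyps[OF heavy(1)] reduces_to_trans_dominating[OF \<open>0 < \<delta>\<close> _ heavy(2,3)] by blast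
    next
      case False
      define M where "M = {u\<in>S. \<delta> * wavg w S \<le> w u \<and> w u \<le> wavg w S / \<delta>}"
      have "\<delta> powr (1 - 1/\<kappa>) * sum w S \<le> (1 - 2*\<delta>) * sum w S"
        using assms(3) less.prems by (intro mult_right_mono sum_nonneg) auto
      with False have "sum w H < (1 - 2*\<delta>) * sum w S"
        by linarith
      then have "\<delta> * sum w S < sum w M"
        unfolding M_def H_def using less.prems \<open>0 < \<delta>\<close> \<open>\<delta> < 1\<close>
        by (intro band_mass_large) auto
      with assms(1) have "reduces_to \<delta> \<kappa> w S M"
        by (intro reduces_to_middle_band[OF \<open>0 < \<delta>\<close> \<open>\<delta> < 1\<close> _ less.prems M_def]) auto
      then show ?thesis
        by blast
    qed
  qed
qed

theorem lemma3p3: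
  fixes \<kappa> \<delta> :: real and E :: "'a \<Rightarrow> 'a \<Rightarrow> bool" and U R :: "'a set"
  assumes "\<kappa> > 1" and "0 < \<delta>" and "\<delta> < 1/4"
    and "1 - 2*\<delta> > \<delta> powr (1 - 1/\<kappa>)"
    and "bip_graph E U R"
  shows "\<exists>U' \<subseteq> U. reduced (\<delta>^2) E U' R \<and> davg E R U' \<ge> \<delta> * davg E R U \<and>
           (\<forall>x::real. x \<ge> \<kappa> \<longrightarrow>
              real (card U') * davg E R U' powr x \<ge> \<delta> powr x * real (card U) * davg E R U powr x)"
proof -
  have "finite U"
    using assms(5) by (simp add: bip_graph_def)
  moreover have "\<forall>u\<in>U. 0 \<le> bdeg E R u"
    by (simp add: bdeg_def)
  ultimately obtain U' where "reduces_to \<delta> \<kappa> (bdeg E R) U U'"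
    using exists_reduces_to[OF assms(1,2,4)] by blast
  then show ?thesis
    by (auto simp: reduces_to_def reduced_iff_balanced davg_eq_wavg)
qed

end
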